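(* Let $\lambda_{\max}>1$ and let $F:[0,\lambda_{\max}]\to\mathbb{R}_+$ be a continuously differentiable concave function with $F(0)=0$, such that $F(x)<F^\star$ for all $x\in[0,1)$ and $F'(1)>0$. Suppose moreover that $F$ is thrice continuously differentiable on $[0,1)$, that $\lim_{x\to1^-}F''(x)<0$, and that $\sup_{x<1}|F^{(3)}(x)|\le M$ for some $M<\infty$. Then there exist $C_1,\varepsilon_0>0$ (depending on $F$) such that $q^\star(\varepsilon)\ge C_1/\sqrt{\varepsilon}$ for all $\varepsilon\in(0,\varepsilon_0]$.
   Context: A control policy is a function $\lambda:\mathbb{Z}_+\to[0,\lambda_{\max}]$; it defines a continuous-time birth–death chain on $\mathbb{Z}_+$ with rate $\lambda(q)$ from $q$ to $q+1$ and rate $1$ from $q$ to $q-1$ ($q\ge1$). Let $\mathcal S$ be the set of states reachable from $0$. The policy is stable if $\sum_{i\in\mathcal S}\prod_{q=0}^{i}\lambda(q)<\infty$ (positive recurrence on $\mathcal S$); then $\pi$ is its stationary distribution and $\bar q\sim\pi$. $F^\star=\sup\{\mathbb{E}_\alpha[F(X)]:\alpha$ a probability measure on $[0,\lambda_{\max}]$, $X\sim\alpha$, $\mathbb{E}_\alpha[X]\le1\}$; regret $R(\lambda)=F^\star-\mathbb{E}_\pi[F(\lambda(\bar q))]$; $q^\star(\varepsilon)=\inf\{\mathbb{E}_\pi[\bar q]:\lambda$ stable, $R(\lambda)\le\varepsilon\}$. *)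

theory Defs
  imports "HOL-Analysis.Analysis" "HOL-Probability.Probability"
begin

text \<open>Control policies: functions nat to [0, lmax]; rate lam q from q to q+1, rate 1 from q to q-1.\<close>

definition policy :: "real \<Rightarrow> (nat \<Rightarrow> real) \<Rightarrow> bool" where
  "policy lmax lam \<longleftrightarrow> (\<forall>q. 0 \<le> lam q \<and> lam q \<le> lmax)"

definition reachable :: "(nat \<Rightarrow> real) \<Rightarrow> nat set" where
  "reachable lam = {i. \<forall>q<i. lam q > 0}"

definition stable :: "(nat \<Rightarrow> real) \<Rightarrow> bool" where
  "stable lam \<longleftrightarrow> summable (\<lambda>i. if i \<in> reachable lam then (\<Prod>q\<le>i. lam q) else 0)"

definition stat_dist :: "(nat \<Rightarrow> real) \<Rightarrow> nat \<Rightarrow> real" where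
  "stat_dist lam i =
     (if i \<in> reachable lam then (\<Prod>q<i. lam q) else 0) /
     (\<Sum>j. if j \<in> reachable lam then (\<Prod>q<j. lam q) else 0)"

definition mean_queue :: "(nat \<Rightarrow> real) \<Rightarrow> ereal" where
  "mean_queue lam = (\<Sum>i. ereal (real i * stat_dist lam i))"

text \<open>F^star: supremum of E_alpha[F(X)] over probability measures alpha on [0,lmax]
  with E_alpha[X] \<le> 1.  F is composed with the clamp to [0,lmax], which agrees
  with F alpha-almost everywhere and makes the integrand Borel measurable.\<close>
definition Fstar :: "real \<Rightarrow> (real \<Rightarrow> real) \<Rightarrow> real" where
  "Fstar lmax F = Sup {(\<integral>x. F (max 0 (min lmax x)) \<partial>\<alpha>) | \<alpha>.
      prob_space \<alpha> \<and> sets \<alpha> = sets borel \<and> emeasure \<alpha> {0..lmax} = 1 \<and>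
      (\<integral>x. x \<partial>\<alpha>) \<le> 1}"

definition regret :: "real \<Rightarrow> (real \<Rightarrow> real) \<Rightarrow> (nat \<Rightarrow> real) \<Rightarrow> real" where
  "regret lmax F lam = Fstar lmax F - (\<Sum>i. stat_dist lam i * F (lam i))"

definition qstar :: "real \<Rightarrow> (real \<Rightarrow> real) \<Rightarrow> real \<Rightarrow> ereal" where
  "qstar lmax F eps = Inf {mean_queue lam | lam.
      policy lmax lam \<and> stable lam \<and> regret lmax F lam \<le> eps}"

end

theory Submission
  imports Defs
begin

text \<open>Write \<open>w i = \<Prod>q<i. \<lambda> q\<close> for the unnormalised stationary weights and \<open>Z = \<Sum>i. w i\<close>.
  Since \<open>w (i + 1) = \<lambda> i * w i\<close>, the sum \<open>\<Sum>i. w i * (1 - \<lambda> i)\<close> telescopes to \<open>w 0 = 1\<close>.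
  Comparing \<open>F\<^sup>\<star>\<close> with the point mass at 1 therefore gives \<open>F' 1 + (\<Sum>i. w i * G (\<lambda> i)) \<le> R(\<lambda>) * Z\<close>
  for the tangent gap \<open>G x = F 1 + F' 1 * (x - 1) - F x \<ge> 0\<close>, and the curvature of \<open>F\<close> left of 1
  gives \<open>G x \<ge> c * (max 0 (1 - x))\<^sup>2\<close>. So regret at most \<open>\<epsilon>\<close> forces \<open>Z \<ge> F' 1 / \<epsilon>\<close> and, by
  Cauchy-Schwarz, a mean deficit \<open>E\<^sub>\<pi>[max 0 (1 - \<lambda>)] \<le> sqrt (\<epsilon> / c)\<close>. Truncating the telescoping
  sum at \<open>N\<close> bounds the mass of \<open>{1..N}\<close> by \<open>N * Z * sqrt (\<epsilon> / c)\<close>, and Markov's inequality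
  bounds the mass beyond \<open>N\<close> by \<open>Z * E\<^sub>\<pi>[q] / N\<close>; with \<open>N \<approx> sqrt (c / \<epsilon>) / 4\<close> this yields
  \<open>E\<^sub>\<pi>[q] \<ge> sqrt (c / \<epsilon>) / 16\<close>.\<close>

lemma Fstar_ge_point:
  fixes F :: "real \<Rightarrow> real"
  assumes cont: "continuous_on {0..lmax} F" and x: "x \<in> {0..lmax}" "x \<le> 1"
  shows "F x \<le> Fstar lmax F"
proof -
  let ?g = "\<lambda>y. F (max 0 (min lmax y))"
  let ?S = "{(\<integral>y. ?g y \<partial>\<alpha>) | \<alpha>.
      prob_space \<alpha> \<and> sets \<alpha> = sets borel \<and> emeasure \<alpha> {0..lmax} = 1 \<and> (\<integral>y. y \<partial>\<alpha>) \<le> 1}"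
  have "continuous_on UNIV ?g"
    by (rule continuous_on_compose2[OF cont]) (use x in \<open>auto intro!: continuous_intros\<close>)
  then have g_meas: "?g \<in> borel_measurable borel"
    by (simp add: borel_measurable_continuous_onI)
  obtain B where B: "\<forall>y\<in>{0..lmax}. \<bar>F y\<bar> \<le> B"
    using compact_imp_bounded[OF compact_continuous_image[OF cont compact_Icc]]
    by (auto simp: bounded_iff)
  have "0 \<le> B" using B x by force
  have g_le: "?g y \<le> B" for y
    using B x by (simp add: abs_le_iff)
  have "bdd_above ?S"
  proof (rule bdd_aboveI)
    fix r assume "r \<in> ?S"
    then obtain \<alpha> where \<alpha>: "prob_space \<alpha>" and r: "r = (\<integral>y. ?g y \<partial>\<alpha>)" by blast
    show "r \<le> B"
    proof (cases "integrable \<alpha> ?g")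
      case True
      then show ?thesis using r prob_space.integral_le_const[OF \<alpha> True] g_le by auto
    next
      case False
      then show ?thesis using r not_integrable_integral_eq[OF False] \<open>0 \<le> B\<close> by simp
    qed
  qed
  moreover have "F x \<in> ?S"
  proof -
    let ?\<delta> = "return borel x"
    have "prob_space ?\<delta>" "sets ?\<delta> = sets borel" "emeasure ?\<delta> {0..lmax} = 1"
      using x by (simp_all add: prob_space_return)
    moreover have "(\<integral>y. y \<partial>?\<delta>) \<le> 1" using x by (simp add: integral_return)
    moreover have "(\<integral>y. ?g y \<partial>?\<delta>) = F x" using integral_return[of x borel ?g] g_meas x by simp
    ultimately show ?thesis by (intro CollectI exI[of _ ?\<delta>]) auto
  qed
  ultimately show ?thesis unfolding Fstar_def by (rule cSup_upper[rotated])
qed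

lemma concave_on_le_tangent:
  fixes F :: "real \<Rightarrow> real"
  assumes conc: "concave_on {a..b} F" and x: "x \<in> {a<..<b}"
    and deriv: "(F has_real_derivative F') (at x within {a..b})" and y: "y \<in> {a..b}"
  shows "F y \<le> F x + F' * (y - x)"
proof -
  have "convex_on {a..b} (\<lambda>t. - F t)" using conc by (simp add: concave_on_def)
  moreover have "((\<lambda>t. - F t) has_real_derivative - F') (at x within {a..b})"
    using deriv by (rule DERIV_minus)
  ultimately have "- F' * (y - x) \<le> - F y - - F x"
    using x y by (intro convex_on_imp_above_tangent[of "{a..b}"]) auto
  then show ?thesis by (simp add: algebra_simps)
qed

lemma tangent_gap_ge_quadratic:
  fixes F F' F'' :: "real \<Rightarrow> real"
  assumes "a \<le> b" and cont: "continuous_on {a..b} F" "continuous_on {a..b} F'"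
    and F': "\<And>t. t \<in> {a<..<b} \<Longrightarrow> (F has_real_derivative F' t) (at t)"
    and F'': "\<And>t. t \<in> {a<..<b} \<Longrightarrow> (F' has_real_derivative F'' t) (at t)"
    and curv: "\<And>t. t \<in> {a<..<b} \<Longrightarrow> F'' t \<le> - 2 * k"
    and x: "x \<in> {a..b}"
  shows "k * (b - x)^2 \<le> F b + F' b * (x - b) - F x"
proof -
  have slope: "2 * k * (b - t) \<le> F' t - F' b" if t: "t \<in> {a..b}" for t
  proof -
    let ?p = "\<lambda>u. F' u + 2 * k * u"
    have "?p b \<le> ?p t"
    proof (rule DERIV_nonpos_imp_decreasing_open[of t b ?p])
      fix u assume "t < u" "u < b"
      then have u: "u \<in> {a<..<b}" using t by simp
      have "(?p has_real_derivative F'' u + 2 * k) (at u)"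
        using F''[OF u] by (auto intro!: derivative_eq_intros)
      moreover have "F'' u + 2 * k \<le> 0" using curv[OF u] by simp
      ultimately show "\<exists>y. (?p has_real_derivative y) (at u) \<and> y \<le> 0" by blast
    qed (use t in \<open>auto intro!: continuous_intros continuous_on_subset[OF cont(2)]\<close>)
    then show ?thesis by (simp add: algebra_simps)
  qed
  let ?h = "\<lambda>t. F b + F' b * (t - b) - F t - k * (b - t)^2"
  have "?h b \<le> ?h x"
  proof (rule DERIV_nonpos_imp_decreasing_open[of x b ?h])
    fix t assume "x < t" "t < b"
    then have "(?h has_real_derivative F' b - F' t + 2 * k * (b - t)) (at t)"
         "F' b - F' t + 2 * k * (b - t) \<le> 0"
      using x F'[of t] slope[of t] by (auto intro!: derivative_eq_intros simp: algebra_simps)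
    then show "\<exists>y. (?h has_real_derivative y) (at t) \<and> y \<le> 0" by blast
  qed (use x in \<open>auto intro!: continuous_intros continuous_on_subset[OF cont(1)]\<close>)
  then show ?thesis by simp
qed

lemma concave_tangent_gap_ge_quadratic:
  fixes F F1 F2 :: "real \<Rightarrow> real"
  assumes lmax: "1 < lmax"
    and F1: "\<forall>x\<in>{0..lmax}. (F has_real_derivative F1 x) (at x within {0..lmax})"
    and F1_cont: "continuous_on {0..lmax} F1"
    and conc: "concave_on {0..lmax} F"
    and F2: "\<forall>x\<in>{0..<1}. (F1 has_real_derivative F2 x) (at x within {0..<1})"
    and F2_lim: "\<exists>L<0. (F2 \<longlongrightarrow> L) (at_left 1)"
  shows "\<exists>c>0. \<forall>x\<in>{0..lmax}. c * (max 0 (1 - x))^2 \<le> F 1 + F1 1 * (x - 1) - F x"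
proof -
  define g where "g x = F 1 + F1 1 * (x - 1) - F x" for x
  have g_convex: "convex_on {0..lmax} g"
    unfolding g_def
  proof (rule convex_on_diff[OF _ conc])
    show "convex_on {0..lmax} (\<lambda>y. F 1 + F1 1 * (y - 1))"
      by (rule convex_onI) (auto simp: algebra_simps)
  qed
  have g_nonneg: "0 \<le> g x" if "x \<in> {0..lmax}" for x
    using concave_on_le_tangent[OF conc _ F1[rule_format] that] lmax by (simp add: g_def)
  obtain L where "L < 0" and "(F2 \<longlongrightarrow> L) (at_left 1)" using F2_lim by blast
  then have "\<forall>\<^sub>F t in at_left 1. F2 t < L / 2" by (intro order_tendstoD) auto
  then obtain b where "b < 1" and b: "\<And>t. b < t \<Longrightarrow> t < 1 \<Longrightarrow> F2 t < L / 2"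
    by (auto simp: eventually_at_left_field)
  define a where "a = max b (1 / 2)"
  define k where "k = - L / 4"
  have a: "0 < a" "a < 1" and k: "0 < k" using \<open>b < 1\<close> \<open>L < 0\<close> by (auto simp: a_def k_def)
  have near: "k * (1 - x)^2 \<le> g x" if x: "x \<in> {a..1}" for x
    unfolding g_def
  proof (rule tangent_gap_ge_quadratic[where F'' = F2])
    show "continuous_on {a..1} F"
      using a lmax by (intro continuous_on_subset[OF DERIV_continuous_on[of "{0..lmax}"]]) (use F1 in auto)
    show "continuous_on {a..1} F1"
      using a lmax by (intro continuous_on_subset[OF F1_cont]) auto
    fix t assume t: "t \<in> {a<..<1}"
    then show "(F has_real_derivative F1 t) (at t)"
      using F1[rule_format, of t] t a lmax at_within_interior[of t "{0..lmax}"] by auto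
    show "(F1 has_real_derivative F2 t) (at t)"
      using F2[rule_format, of t] t a at_within_interior[of t "{0..<1}"] by auto
    show "F2 t \<le> - 2 * k" using b[of t] t by (auto simp: a_def k_def)
  qed (use a x in auto)
  define c where "c = k * (1 - a)^2"
  have "0 < c" using a k by (simp add: c_def)
  moreover have "c * (max 0 (1 - x))^2 \<le> g x" if x: "x \<in> {0..lmax}" for x
  proof (cases "x < a")
    case True
    have "convex_on {x..1} g"
      using x lmax by (intro convex_on_subset[OF g_convex]) auto
    then have "g a \<le> max (g x) (g 1)" using True a by (intro convex_on_le_max) auto
    then have "c \<le> g x" using near[of a] g_nonneg[OF x] a by (simp add: c_def g_def)
    moreover have "(max 0 (1 - x))^2 \<le> 1" using x by (auto simp: power_le_one)
    ultimately show ?thesis using \<open>0 < c\<close> by (meson order_trans mult_left_le less_imp_le)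
  next
    case False
    have "c \<le> k" using a k by (simp add: c_def mult_left_le power_le_one)
    then show ?thesis using near[of x] g_nonneg[OF x] False
      by (cases "x \<le> 1") (auto intro: order_trans[OF mult_right_mono])
  qed
  ultimately show ?thesis unfolding g_def by blast
qed

lemma suminf_le_sum_atMost_plus_moment:
  fixes w :: "nat \<Rightarrow> real"
  assumes nonneg: "\<And>i. 0 \<le> w i" and "summable w" and moment: "summable (\<lambda>i. real i * w i)"
    and "0 < N"
  shows "(\<Sum>i. w i) \<le> (\<Sum>i\<le>N. w i) + (\<Sum>i. real i * w i) / real N"
proof -
  have head: "(\<lambda>i. if i \<le> N then w i else 0) sums (\<Sum>i\<le>N. w i)"
    using sums_If_finite_set[of "{..N}" w] by (simp add: atMost_def)
  have "w i \<le> (if i \<le> N then w i else 0) + real i * w i / real N" for i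
  proof (cases "i \<le> N")
    case False
    then have "w i * 1 \<le> w i * (real i / real N)"
      using nonneg[of i] \<open>0 < N\<close> by (intro mult_left_mono) (auto simp: le_divide_eq)
    then show ?thesis using False by (simp add: mult.commute)
  qed (use nonneg[of i] \<open>0 < N\<close> in simp)
  then have "(\<Sum>i. w i) \<le> (\<Sum>i. (if i \<le> N then w i else 0) + real i * w i / real N)"
    by (intro suminf_le) (use assms head in \<open>auto intro!: summable_add simp: sums_iff\<close>)
  also have "\<dots> = (\<Sum>i. if i \<le> N then w i else 0) + (\<Sum>i. real i * w i / real N)"
    by (rule suminf_add[symmetric]) (use head moment in \<open>auto simp: sums_iff\<close>)
  also have "\<dots> = (\<Sum>i\<le>N. w i) + (\<Sum>i. real i * w i) / real N"
    using head suminf_divide[OF moment] by (simp add: sums_iff)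
  finally show ?thesis .
qed

lemma weighted_sum_le_of_weighted_sum_sq:
  fixes w d :: "nat \<Rightarrow> real" and s :: real
  assumes w: "\<And>i. 0 \<le> w i" and d: "\<And>i. 0 \<le> d i" "\<And>i. d i \<le> 1"
    and sw: "summable w" and s: "0 < s"
    and sq: "(\<Sum>i. w i * (d i)^2) \<le> s^2 * (\<Sum>i. w i)"
  shows "(\<Sum>i. w i * d i) \<le> s * (\<Sum>i. w i)"
proof -
  have "norm (w i * d i) \<le> w i" "norm (w i * (d i)^2) \<le> w i" for i
    using w[of i] d[of i] by (auto simp: abs_mult mult_left_le power_le_one)
  then have sd: "summable (\<lambda>i. w i * d i)" and sd2: "summable (\<lambda>i. w i * (d i)^2)"
    by (auto intro: summable_comparison_test'[OF sw])
  have "w i * d i \<le> w i * (d i)^2 / (2 * s) + s / 2 * w i" for i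
  proof -
    have "0 \<le> (d i - s)^2" by simp
    then have "d i \<le> (d i)^2 / (2 * s) + s / 2" using s by (simp add: field_simps power2_eq_square)
    from mult_left_mono[OF this w[of i]] show ?thesis by (simp add: algebra_simps)
  qed
  then have "(\<Sum>i. w i * d i) \<le> (\<Sum>i. w i * (d i)^2 / (2 * s) + s / 2 * w i)"
    by (intro suminf_le sd summable_add summable_divide summable_mult sd2 sw)
  also have "\<dots> = (\<Sum>i. w i * (d i)^2) / (2 * s) + s / 2 * (\<Sum>i. w i)"
    using suminf_add[OF summable_divide[OF sd2, of "2 * s"] summable_mult[OF sw, of "s / 2"]]
      suminf_divide[OF sd2, of "2 * s"] suminf_mult[OF sw, of "s / 2"] by linarith
  also have "\<dots> \<le> s^2 * (\<Sum>i. w i) / (2 * s) + s / 2 * (\<Sum>i. w i)"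
    using sq s by (simp add: divide_right_mono)
  also have "\<dots> = s * (\<Sum>i. w i)" using s by (simp add: field_simps power2_eq_square)
  finally show ?thesis .
qed

lemma ereal_le_suminf_of_summable:
  fixes f :: "nat \<Rightarrow> real"
  assumes "\<And>i. 0 \<le> f i" and "summable f \<Longrightarrow> b \<le> (\<Sum>i. f i)"
  shows "ereal b \<le> (\<Sum>i. ereal (f i))"
proof (cases "summable f")
  case True
  then show ?thesis using assms(2) by (simp add: suminf_ereal')
next
  case False
  then have "(\<Sum>i. ereal (f i)) = \<infinity>" using summable_ereal[of f, OF assms(1)] by blast
  then show ?thesis by simp
qed

definition bd_weight :: "(nat \<Rightarrow> real) \<Rightarrow> nat \<Rightarrow> real" where
  "bd_weight lam i = (if i \<in> reachable lam then (\<Prod>q<i. lam q) else 0)"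

lemma stat_dist_eq: "stat_dist lam i = bd_weight lam i / (\<Sum>j. bd_weight lam j)"
  by (simp add: stat_dist_def bd_weight_def)

lemma bd_weight_0 [simp]: "bd_weight lam 0 = 1"
  by (simp add: bd_weight_def reachable_def)

lemma bd_weight_nonneg: "(\<And>q. 0 \<le> lam q) \<Longrightarrow> 0 \<le> bd_weight lam i"
  by (simp add: bd_weight_def prod_nonneg)

lemma bd_weight_Suc:
  assumes "\<And>q. 0 \<le> lam q"
  shows "bd_weight lam (Suc i) = lam i * bd_weight lam i"
proof -
  have "Suc i \<in> reachable lam \<longleftrightarrow> i \<in> reachable lam \<and> lam i \<noteq> 0"
    using assms[of i] by (auto simp: reachable_def less_Suc_eq)
  then show ?thesis by (auto simp: bd_weight_def)
qed

lemma summable_bd_weight: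
  assumes "\<And>q. 0 \<le> lam q" and "stable lam"
  shows "summable (bd_weight lam)"
proof -
  have "(if i \<in> reachable lam then \<Prod>q\<le>i. lam q else 0) = lam i * bd_weight lam i" for i
    by (simp add: bd_weight_def mult.commute flip: lessThan_Suc_atMost)
  then have "(if i \<in> reachable lam then \<Prod>q\<le>i. lam q else 0) = bd_weight lam (Suc i)" for i
    by (simp add: bd_weight_Suc[OF assms(1)])
  then show ?thesis using assms(2) by (simp add: stable_def summable_Suc_iff[of "bd_weight lam"])
qed

lemma suminf_bd_weight_ge_1:
  assumes "\<And>q. 0 \<le> lam q" and "stable lam"
  shows "1 \<le> (\<Sum>i. bd_weight lam i)"
  using sum_le_suminf[OF summable_bd_weight[OF assms], of "{0}"] bd_weight_nonneg[OF assms(1)]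
  by simp

lemma bd_weight_flux_sums:
  assumes lam: "\<And>q. 0 \<le> lam q" and "stable lam"
  shows "(\<lambda>i. bd_weight lam i * (1 - lam i)) sums 1"
proof -
  have "bd_weight lam \<longlonglongrightarrow> 0" using summable_bd_weight[OF assms] by (rule summable_LIMSEQ_zero)
  from telescope_sums'[OF this] show ?thesis by (simp add: bd_weight_Suc[OF lam] algebra_simps)
qed

lemma bd_weight_truncated_flux_sums:
  assumes lam: "\<And>q. 0 \<le> lam q" and "stable lam"
  shows "(\<lambda>i. bd_weight lam i * (1 - lam i) * real (min i N)) sums (\<Sum>i<N. bd_weight lam (Suc i))"
proof -
  let ?w = "bd_weight lam"
  let ?b = "\<lambda>i. ?w i * real (min i N)"
  have "?w \<longlonglongrightarrow> 0" using summable_bd_weight[OF assms] by (rule summable_LIMSEQ_zero)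
  then have upper: "(\<lambda>i. ?w i * real N) \<longlonglongrightarrow> 0" by (rule tendsto_mult_left_zero)
  have "\<forall>i. norm (?b i) \<le> ?w i * real N"
    using bd_weight_nonneg[OF lam] by (auto intro: mult_left_mono)
  then have "?b \<longlonglongrightarrow> 0"
    by (rule Lim_null_comparison[OF always_eventually upper])
  from telescope_sums'[OF this] have tel: "(\<lambda>i. ?b i - ?b (Suc i)) sums 0" by simp
  have fin: "(\<lambda>i. if i < N then ?w (Suc i) else 0) sums (\<Sum>i<N. ?w (Suc i))"
    using sums_If_finite_set[of "{..<N}" "\<lambda>i. ?w (Suc i)"] by (simp add: lessThan_def)
  have "?b i - ?b (Suc i) + (if i < N then ?w (Suc i) else 0) = ?w i * (1 - lam i) * real (min i N)"
    for i by (cases "i < N") (simp_all add: bd_weight_Suc[OF lam] algebra_simps)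
  then show ?thesis using sums_add[OF tel fin] by simp
qed

lemma suminf_bd_weight_le:
  assumes lam: "\<And>q. 0 \<le> lam q" and st: "stable lam"
    and moment: "summable (\<lambda>i. real i * bd_weight lam i)" and "0 < N"
  shows "(\<Sum>i. bd_weight lam i)
    \<le> 1 + real N * (\<Sum>i. bd_weight lam i * max 0 (1 - lam i)) + (\<Sum>i. real i * bd_weight lam i) / real N"
proof -
  let ?w = "bd_weight lam"
  have "norm (?w i * max 0 (1 - lam i)) \<le> ?w i" for i
    using lam[of i] bd_weight_nonneg[of lam i, OF lam] by (auto simp: abs_mult mult_left_le)
  then have deficit: "summable (\<lambda>i. ?w i * max 0 (1 - lam i))"
    by (rule summable_comparison_test'[OF summable_bd_weight[OF lam st]])
  have "(\<Sum>i<N. ?w (Suc i)) \<le> (\<Sum>i. real N * (?w i * max 0 (1 - lam i)))"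
  proof (rule sums_le[OF _ bd_weight_truncated_flux_sums[OF lam st]])
    show "(\<lambda>i. real N * (?w i * max 0 (1 - lam i))) sums (\<Sum>i. real N * (?w i * max 0 (1 - lam i)))"
      using deficit by (intro summable_sums summable_mult)
    fix i
    have "(1 - lam i) * real (min i N) \<le> max 0 (1 - lam i) * real N" by (intro mult_mono) auto
    from mult_left_mono[OF this bd_weight_nonneg[of lam i, OF lam]]
    show "?w i * (1 - lam i) * real (min i N) \<le> real N * (?w i * max 0 (1 - lam i))"
      by (simp add: ac_simps)
  qed
  also have "\<dots> = real N * (\<Sum>i. ?w i * max 0 (1 - lam i))" using deficit by (rule suminf_mult)
  finally have "(\<Sum>i\<le>N. ?w i) \<le> 1 + real N * (\<Sum>i. ?w i * max 0 (1 - lam i))"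
    by (simp add: sum.atMost_shift)
  then show ?thesis
    using suminf_le_sum_atMost_plus_moment[OF bd_weight_nonneg[OF lam] summable_bd_weight[OF lam st]
        moment \<open>0 < N\<close>] by linarith
qed

lemma bd_mean_ge_inverse_deficit:
  fixes lam :: "nat \<Rightarrow> real" and s :: real
  assumes lam: "\<And>q. 0 \<le> lam q" and st: "stable lam"
    and moment: "summable (\<lambda>i. real i * bd_weight lam i)"
    and s: "0 < s" "s \<le> 1 / 8"
    and mass: "4 \<le> (\<Sum>i. bd_weight lam i)"
    and deficit: "(\<Sum>i. bd_weight lam i * max 0 (1 - lam i)) \<le> s * (\<Sum>i. bd_weight lam i)"
  shows "1 / (16 * s) \<le> (\<Sum>i. real i * bd_weight lam i) / (\<Sum>i. bd_weight lam i)"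
proof -
  define Z where "Z = (\<Sum>i. bd_weight lam i)"
  define S where "S = (\<Sum>i. real i * bd_weight lam i)"
  define N where "N = nat \<lfloor>1 / (4 * s)\<rfloor>"
  have Z: "4 \<le> Z" using mass by (simp add: Z_def)
  have N_bounds: "1 / (4 * s) - 1 \<le> real N" "real N \<le> 1 / (4 * s)"
    using s by (auto simp: N_def of_nat_nat)
  have "1 \<le> 1 / (8 * s)" "1 / (4 * s) = 2 * (1 / (8 * s))" using s by (simp_all add: field_simps)
  then have N1: "1 / (8 * s) \<le> real N" and "0 < N" using N_bounds(1) by linarith+
  have "real N * s \<le> 1 / 4" using N_bounds(2) s by (simp add: field_simps)
  note N = N1 this \<open>0 < N\<close>
  have "Z \<le> 1 + real N * (s * Z) + S / real N"
    using suminf_bd_weight_le[OF lam st moment \<open>0 < N\<close>] mult_left_mono[OF deficit, of "real N"]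
    unfolding Z_def S_def by linarith
  also have "\<dots> \<le> Z / 4 + Z / 4 + S / real N"
  proof -
    have "real N * s * Z \<le> 1 / 4 * Z" using Z by (intro mult_right_mono[OF N(2)]) simp
    then have "real N * (s * Z) \<le> Z / 4" by (simp add: ac_simps)
    then show ?thesis using Z by linarith
  qed
  finally have "real N / 2 \<le> S / Z" using N Z by (simp add: field_simps)
  moreover have "1 / (16 * s) = 1 / (8 * s) / 2" by simp
  ultimately have "1 / (16 * s) \<le> S / Z" using N(1) by linarith
  then show ?thesis by (simp add: S_def Z_def)
qed

lemma tangent_gap_sum_le_regret:
  fixes F :: "real \<Rightarrow> real" and lam :: "nat \<Rightarrow> real" and \<sigma> :: real
  assumes pol: "policy lmax lam" and st: "stable lam"
    and F_cont: "continuous_on {0..lmax} F" and F1_le: "F 1 \<le> Fstar lmax F"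
  defines "G \<equiv> \<lambda>i. F 1 + \<sigma> * (lam i - 1) - F (lam i)"
  shows "summable (\<lambda>i. bd_weight lam i * G i)"
    and "\<sigma> + (\<Sum>i. bd_weight lam i * G i) \<le> regret lmax F lam * (\<Sum>i. bd_weight lam i)"
proof -
  let ?w = "bd_weight lam"
  define Z where "Z = (\<Sum>i. ?w i)"
  define P where "P = (\<Sum>i. ?w i * F (lam i))"
  have lam: "\<And>q. 0 \<le> lam q" and lam_in: "\<And>q. lam q \<in> {0..lmax}"
    using pol by (auto simp: policy_def)
  have sw: "summable ?w" by (rule summable_bd_weight[OF lam st])
  obtain B where B: "\<forall>x\<in>{0..lmax}. \<bar>F x\<bar> \<le> B"
    using compact_imp_bounded[OF compact_continuous_image[OF F_cont compact_Icc]]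
    by (auto simp: bounded_iff)
  have "norm (?w i * F (lam i)) \<le> B * ?w i" for i
  proof -
    have "?w i * \<bar>F (lam i)\<bar> \<le> ?w i * B"
      using B lam_in[of i] bd_weight_nonneg[of lam i, OF lam] by (intro mult_left_mono) auto
    then show ?thesis using bd_weight_nonneg[of lam i, OF lam] by (simp add: abs_mult mult.commute)
  qed
  then have sP: "summable (\<lambda>i. ?w i * F (lam i))"
    by (rule summable_comparison_test'[OF summable_mult[OF sw]])
  have "(\<lambda>i. F 1 * ?w i - \<sigma> * (?w i * (1 - lam i)) - ?w i * F (lam i)) sums (F 1 * Z - \<sigma> * 1 - P)"
    unfolding Z_def P_def
    by (intro sums_diff sums_mult summable_sums sw sP bd_weight_flux_sums[OF lam st])
  moreover have "F 1 * ?w i - \<sigma> * (?w i * (1 - lam i)) - ?w i * F (lam i) = ?w i * G i" for i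
    by (simp add: G_def algebra_simps)
  ultimately have sums: "(\<lambda>i. ?w i * G i) sums (F 1 * Z - \<sigma> - P)" by simp
  then show "summable (\<lambda>i. ?w i * G i)" by (rule sums_summable)
  have "1 \<le> Z" unfolding Z_def by (rule suminf_bd_weight_ge_1[OF lam st])
  have "regret lmax F lam = Fstar lmax F - P / Z"
    by (simp add: regret_def stat_dist_eq Z_def P_def suminf_divide[OF sP])
  then have "F 1 * Z - P \<le> regret lmax F lam * Z"
    using F1_le \<open>1 \<le> Z\<close> by (simp add: field_simps)
  then show "\<sigma> + (\<Sum>i. ?w i * G i) \<le> regret lmax F lam * (\<Sum>i. ?w i)"
    using sums_unique[OF sums] unfolding Z_def by linarith
qed

lemma bd_deficit_le_of_regret:
  fixes F :: "real \<Rightarrow> real" and lam :: "nat \<Rightarrow> real"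
  assumes pol: "policy lmax lam" and st: "stable lam"
    and F_cont: "continuous_on {0..lmax} F" and F1_le: "F 1 \<le> Fstar lmax F"
    and c: "0 < c" and "0 \<le> \<sigma>"
    and gap: "\<forall>x\<in>{0..lmax}. c * (max 0 (1 - x))^2 \<le> F 1 + \<sigma> * (x - 1) - F x"
    and eps: "0 < eps" and regret: "regret lmax F lam \<le> eps"
  shows "\<sigma> \<le> eps * (\<Sum>i. bd_weight lam i)"
    and "(\<Sum>i. bd_weight lam i * max 0 (1 - lam i)) \<le> sqrt (eps / c) * (\<Sum>i. bd_weight lam i)"
proof -
  let ?w = "bd_weight lam"
  define Z where "Z = (\<Sum>i. ?w i)"
  define d where "d i = max 0 (1 - lam i)" for i
  define G where "G i = F 1 + \<sigma> * (lam i - 1) - F (lam i)" for i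
  have lam: "\<And>q. 0 \<le> lam q" and lam_in: "\<And>q. lam q \<in> {0..lmax}"
    using pol by (auto simp: policy_def)
  have w: "\<And>i. 0 \<le> ?w i" and sw: "summable ?w" and "1 \<le> Z"
    using bd_weight_nonneg[OF lam] summable_bd_weight[OF lam st] suminf_bd_weight_ge_1[OF lam st]
    by (auto simp: Z_def)
  have d: "\<And>i. 0 \<le> d i" "\<And>i. d i \<le> 1" using lam by (auto simp: d_def)
  have "norm (?w i * (d i)^2) \<le> ?w i" for i
    using w[of i] d[of i] by (auto simp: abs_mult mult_left_le power_le_one)
  then have sd2: "summable (\<lambda>i. ?w i * (d i)^2)" by (rule summable_comparison_test'[OF sw])
  have sG: "summable (\<lambda>i. ?w i * G i)" and reg: "\<sigma> + (\<Sum>i. ?w i * G i) \<le> regret lmax F lam * Z"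
    using tangent_gap_sum_le_regret[OF pol st F_cont F1_le, of \<sigma>] by (simp_all add: G_def Z_def)
  have "c * (\<Sum>i. ?w i * (d i)^2) = (\<Sum>i. c * (?w i * (d i)^2))" using sd2 by (rule suminf_mult[symmetric])
  also have "\<dots> \<le> (\<Sum>i. ?w i * G i)"
  proof (rule suminf_le)
    show "c * (?w i * (d i)^2) \<le> ?w i * G i" for i
      using mult_left_mono[OF gap[rule_format, OF lam_in[of i]] w[of i]]
      by (simp add: G_def d_def ac_simps)
  qed (use sd2 sG in auto)
  also have "\<dots> \<le> eps * Z - \<sigma>"
  proof -
    have "regret lmax F lam * Z \<le> eps * Z" using regret \<open>1 \<le> Z\<close> by (intro mult_right_mono) auto
    then show ?thesis using reg by linarith
  qed
  finally have quad: "c * (\<Sum>i. ?w i * (d i)^2) \<le> eps * Z - \<sigma>" .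
  moreover have "0 \<le> c * (\<Sum>i. ?w i * (d i)^2)" using c w sd2 by (simp add: suminf_nonneg)
  ultimately show "\<sigma> \<le> eps * (\<Sum>i. ?w i)" unfolding Z_def by linarith
  have "(\<Sum>i. ?w i * (d i)^2) \<le> (sqrt (eps / c))^2 * Z"
    using quad \<open>0 \<le> \<sigma>\<close> c eps by (simp add: field_simps)
  from weighted_sum_le_of_weighted_sum_sq[OF w d sw _ this[unfolded Z_def]]
  show "(\<Sum>i. ?w i * max 0 (1 - lam i)) \<le> sqrt (eps / c) * (\<Sum>i. ?w i)"
    using c eps by (simp add: d_def)
qed

lemma mean_queue_ge_of_regret:
  fixes F :: "real \<Rightarrow> real" and lam :: "nat \<Rightarrow> real"
  assumes pol: "policy lmax lam" and st: "stable lam"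
    and F_cont: "continuous_on {0..lmax} F" and F1_le: "F 1 \<le> Fstar lmax F"
    and c: "0 < c" and "0 \<le> \<sigma>"
    and gap: "\<forall>x\<in>{0..lmax}. c * (max 0 (1 - x))^2 \<le> F 1 + \<sigma> * (x - 1) - F x"
    and eps: "0 < eps" "eps \<le> \<sigma> / 4" "eps \<le> c / 64" and regret: "regret lmax F lam \<le> eps"
  shows "ereal (sqrt c / 16 / sqrt eps) \<le> mean_queue lam"
proof -
  let ?w = "bd_weight lam"
  define Z where "Z = (\<Sum>i. ?w i)"
  define s where "s = sqrt (eps / c)"
  have lam: "\<And>q. 0 \<le> lam q" using pol by (simp add: policy_def)
  note bounds = bd_deficit_le_of_regret[OF pol st F_cont F1_le c \<open>0 \<le> \<sigma>\<close> gap eps(1) regret]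
  have "eps * 4 \<le> eps * Z" using bounds(1) eps(2) by (simp add: Z_def)
  then have mass: "4 \<le> Z" using eps(1) by simp
  have "eps / c \<le> (1 / 8)^2" using c eps by (simp add: field_simps)
  then have "s \<le> 1 / 8" unfolding s_def by (rule real_le_lsqrt[rotated]) simp
  moreover have "0 < s" using c eps by (simp add: s_def)
  ultimately have s: "0 < s" "s \<le> 1 / 8" by simp_all
  have "ereal (1 / (16 * s)) \<le> (\<Sum>i. ereal (real i * ?w i / Z))"
  proof (rule ereal_le_suminf_of_summable)
    show "0 \<le> real i * ?w i / Z" for i using bd_weight_nonneg[OF lam] mass by simp
    assume "summable (\<lambda>i. real i * ?w i / Z)"
    then have moment: "summable (\<lambda>i. real i * ?w i)" using mass by simp
    from bd_mean_ge_inverse_deficit[OF lam st moment s mass[unfolded Z_def] bounds(2)[folded s_def]]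
    show "1 / (16 * s) \<le> (\<Sum>i. real i * ?w i / Z)" by (simp add: Z_def suminf_divide[OF moment])
  qed
  moreover have "mean_queue lam = (\<Sum>i. ereal (real i * ?w i / Z))"
    by (simp add: mean_queue_def stat_dist_eq Z_def)
  moreover have "1 / (16 * s) = sqrt c / 16 / sqrt eps"
    using c eps by (simp add: s_def real_sqrt_divide)
  ultimately show ?thesis by simp
qed

theorem propositionC3:
  fixes lmax :: real and F F1 F2 F3 :: "real \<Rightarrow> real"
  assumes lmax: "lmax > 1"
    and nonneg: "\<forall>x\<in>{0..lmax}. F x \<ge> 0"
    and F1: "\<forall>x\<in>{0..lmax}. (F has_real_derivative F1 x) (at x within {0..lmax})"
    and F1_cont: "continuous_on {0..lmax} F1"
    and conc: "concave_on {0..lmax} F"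
    and F0: "F 0 = 0"
    and below: "\<forall>x\<in>{0..<1}. F x < Fstar lmax F"
    and F1_pos: "F1 1 > 0"
    and F2: "\<forall>x\<in>{0..<1}. (F1 has_real_derivative F2 x) (at x within {0..<1})"
    and F3: "\<forall>x\<in>{0..<1}. (F2 has_real_derivative F3 x) (at x within {0..<1})"
    and F3_cont: "continuous_on {0..<1} F3"
    and F2_lim: "\<exists>L<0. (F2 \<longlongrightarrow> L) (at_left 1)"
    and F3_bdd: "\<exists>M. \<forall>x\<in>{0..<1}. \<bar>F3 x\<bar> \<le> M"
  shows "\<exists>C1>0. \<exists>eps0>0. \<forall>eps\<in>{0<..eps0}. qstar lmax F eps \<ge> ereal (C1 / sqrt eps)"
proof -
  obtain c where "0 < c"
    and gap: "\<forall>x\<in>{0..lmax}. c * (max 0 (1 - x))^2 \<le> F 1 + F1 1 * (x - 1) - F x"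
    using concave_tangent_gap_ge_quadratic[OF lmax F1 F1_cont conc F2 F2_lim] by blast
  have F_cont: "continuous_on {0..lmax} F" using F1 by (intro DERIV_continuous_on) auto
  have F1_le: "F 1 \<le> Fstar lmax F" using Fstar_ge_point[OF F_cont] lmax by simp
  define eps0 where "eps0 = min (F1 1 / 4) (c / 64)"
  have "ereal (sqrt c / 16 / sqrt eps) \<le> qstar lmax F eps" if eps: "eps \<in> {0<..eps0}" for eps
    unfolding qstar_def
  proof (rule Inf_greatest, clarify)
    fix lam assume "policy lmax lam" "stable lam" "regret lmax F lam \<le> eps"
    with eps show "ereal (sqrt c / 16 / sqrt eps) \<le> mean_queue lam"
      using mean_queue_ge_of_regret[OF _ _ F_cont F1_le \<open>0 < c\<close> _ gap] F1_pos
      by (simp add: eps0_def)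
  qed
  moreover have "0 < sqrt c / 16" "0 < eps0" using \<open>0 < c\<close> F1_pos by (simp_all add: eps0_def)
  ultimately show ?thesis by blast
qed

end
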